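(* Let $\mathbb{X}$ be a finite-dimensional real Banach space. Then $n(\mathbb{X})=1$ if and only if $(x,y)$ is a parallel pair for every $x\in \mathrm{Ext}\,B_{\mathbb{X}}$ and every $y\in S_{\mathbb{X}}$.
   Context: All spaces are real. $\mathrm{Ext}\,B_{\mathbb{X}}$ is the set of extreme points of the unit ball $B_{\mathbb{X}}$, $S_{\mathbb{X}}$ the unit sphere, $\mathbb{L}(\mathbb{X})$ the bounded linear operators on $\mathbb{X}$. The numerical radius of $T\in\mathbb{L}(\mathbb{X})$ is $v(T)=\sup\{|f(Tx)|: x\in S_{\mathbb{X}}, f\in S_{\mathbb{X}^*}, f(x)=1\}$, and the numerical index is $n(\mathbb{X})=\inf\{v(T): T\in\mathbb{L}(\mathbb{X}),\ \|T\|=1\}$. $(x,y)$ is a parallel pair if $\|x+\lambda y\|=\|x\|+\|y\|$ for some scalar $\lambda$ with $|\lambda|=1$. *)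

theory Defs
  imports "HOL-Analysis.Analysis"
begin

definition numerical_radius :: "('a::real_normed_vector \<Rightarrow> 'a) \<Rightarrow> real" where
  "numerical_radius T =
     Sup {\<bar>f (T x)\<bar> | x f. norm x = 1 \<and> bounded_linear f \<and> onorm f = 1 \<and> f x = 1}"

definition numerical_index :: "'a::real_normed_vector itself \<Rightarrow> real" where
  "numerical_index (_ :: 'a itself) =
     Inf {numerical_radius T | T :: 'a \<Rightarrow> 'a. bounded_linear T \<and> onorm T = 1}"

definition parallel_pair :: "'a::real_normed_vector \<Rightarrow> 'a \<Rightarrow> bool" where
  "parallel_pair x y \<longleftrightarrow> (\<exists>l::real. \<bar>l\<bar> = 1 \<and> norm (x + l *\<^sub>R y) = norm x + norm y)"

end

(*
  In finite dimensions every extreme point x of the unit ball has arbitrarily small slices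
  (Choquet's lemma: separate x from the convex hull of the part of the ball far from x).
  If n(X) = 1, apply v(T) = 1 to the rank-one operator T = h (.) y, where h defines a small
  slice at x: a state (z, f) with |h z| |f y| close to 1 puts z, up to sign, into the slice,
  so f x + |f y| is close to 2, and hence max (norm (x + y)) (norm (x - y)) = 2.
  Conversely, a norm-one T attains its norm at an extreme point y, namely at an extreme point
  of the exposed face where a functional norming some T x is maximal after composing with T.
  If (y, T y) is a parallel pair, a functional norming y + l T y is a state at y with
  |f (T y)| = 1, so v(T) = 1.
  Finite dimensionality enters through Hahn-Banach by finitely many one-step extensions,
  compactness of closed bounded sets, and an auxiliary Euclidean structure on coordinates,
  whose strictly convex square norm yields extreme points and nearest-point separation.
*)
theory Submission
  imports Defs
begin

lemma abs_le_norm_if_onorm_le_1: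
  fixes f :: "'a::real_normed_vector \<Rightarrow> real"
  assumes "bounded_linear f" "onorm f \<le> 1"
  shows "\<bar>f x\<bar> \<le> norm x"
  using onorm[OF assms(1), of x] assms(2) mult_right_mono[OF assms(2) norm_ge_zero, of x] by simp

lemma norm_le_onorm_if_norm_le_1:
  assumes "bounded_linear T" "norm x \<le> 1"
  shows "norm (T x) \<le> onorm T"
  using onorm[OF assms(1), of x] mult_left_le[OF assms(2) onorm_pos_le[OF assms(1)]] by linarith

lemma abs_add_abs_le_max_norm:
  fixes f :: "'a::real_normed_vector \<Rightarrow> real"
  assumes "bounded_linear f" "onorm f \<le> 1"
  shows "\<bar>f x\<bar> + \<bar>f y\<bar> \<le> max (norm (x + y)) (norm (x - y))"
proof -
  have "\<bar>a\<bar> + \<bar>b\<bar> = max \<bar>a + b\<bar> \<bar>a - b\<bar>" for a b :: real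
    by (auto simp: max_def abs_if)
  then have "\<bar>f x\<bar> + \<bar>f y\<bar> = max \<bar>f (x + y)\<bar> \<bar>f (x - y)\<bar>"
    using assms(1) by (simp add: linear_add linear_diff bounded_linear.linear)
  also have "\<dots> \<le> max (norm (x + y)) (norm (x - y))"
    using abs_le_norm_if_onorm_le_1[OF assms] by (meson max.mono)
  finally show ?thesis .
qed

lemma parallel_pair_iff_max:
  "parallel_pair x y \<longleftrightarrow> max (norm (x + y)) (norm (x - y)) = norm x + norm y"
proof -
  have "parallel_pair x y \<longleftrightarrow> norm (x + y) = norm x + norm y \<or> norm (x - y) = norm x + norm y"
    unfolding parallel_pair_def abs_eq_iff' by force
  moreover have "norm (x + y) \<le> norm x + norm y" "norm (x - y) \<le> norm x + norm y"
    by (simp_all add: norm_triangle_ineq norm_triangle_ineq4)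
  ultimately show ?thesis
    by linarith
qed

lemma extreme_point_of_unit_cball_norm:
  fixes x :: "'a::real_normed_vector"
  assumes x: "x extreme_point_of cball 0 1" and e: "e \<noteq> (0::'a)"
  shows "norm x = 1"
proof (rule ccontr)
  assume "norm x \<noteq> 1"
  with x have "x \<in> ball 0 1"
    by (simp add: extreme_point_of_def)
  then have "x \<in> rel_interior (cball 0 1)"
    using interior_subset_rel_interior interior_maximal[OF ball_subset_cball open_ball] by blast
  moreover have "cball 0 1 \<noteq> {x}"
  proof
    assume "cball 0 1 = {x}"
    moreover have "0 \<in> cball (0::'a) 1" "(1 / norm e) *\<^sub>R e \<in> cball 0 1"
      using e by simp_all
    ultimately show False
      using e by auto
  qed
  ultimately show False
    using extreme_point_not_in_REL_INTERIOR[OF x] by blast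
qed

lemma face_of_supporting_functional:
  fixes \<phi> :: "'a::real_vector \<Rightarrow> real"
  assumes S: "convex S" and \<phi>: "linear \<phi>" and le: "\<And>x. x \<in> S \<Longrightarrow> \<phi> x \<le> c"
  shows "S \<inter> {x. \<phi> x = c} face_of S"
proof -
  have "convex (S \<inter> {x. \<phi> x = c})"
    using S \<phi> by (intro convex_Int) (auto simp: convex_def linear_add linear_scale simp flip: distrib_right)
  moreover have "a \<in> S \<inter> {x. \<phi> x = c} \<and> b \<in> S \<inter> {x. \<phi> x = c}"
    if a: "a \<in> S" and b: "b \<in> S" and x: "x \<in> S \<inter> {x. \<phi> x = c}" and "x \<in> open_segment a b" for a b x
  proof -
    obtain u where u: "0 < u" "u < 1" "x = (1 - u) *\<^sub>R a + u *\<^sub>R b"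
      using \<open>x \<in> open_segment a b\<close> by (auto simp: in_segment)
    have "(1 - u) * (c - \<phi> a) + u * (c - \<phi> b) = 0"
      using x u(3) \<phi> by (simp add: linear_add linear_scale left_diff_distrib right_diff_distrib)
    moreover have "0 \<le> (1 - u) * (c - \<phi> a)" "0 \<le> u * (c - \<phi> b)"
      using le[OF a] le[OF b] u by simp_all
    ultimately have "(1 - u) * (c - \<phi> a) = 0" "u * (c - \<phi> b) = 0"
      by linarith+
    then show ?thesis
      using a b u by simp
  qed
  ultimately show ?thesis
    unfolding face_of_def by blast
qed

lemma extreme_point_in_subset_of_convex_hull:
  assumes "x extreme_point_of K" "convex K" "x \<in> convex hull U" "U \<subseteq> K"
  shows "x \<in> U"
proof -
  have "convex hull U \<subseteq> K"
    using assms(4,2) by (rule hull_minimal)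
  then have "x extreme_point_of convex hull U"
    using assms(1,3) unfolding extreme_point_of_def by blast
  then show ?thesis
    by (rule extreme_point_of_convex_hull)
qed

lemma compact_convex_hull_Un:
  fixes A C :: "'a::real_normed_vector set"
  assumes A: "compact A" "convex A" and C: "compact C" "convex C"
  shows "compact (convex hull (A \<union> C))"
proof (cases "A = {} \<or> C = {} \<or> A = C")
  case True
  then show ?thesis
    using A C by (auto simp: convex_hull_eq[THEN iffD2])
next
  case False
  define E where "E = {(1 - u) *\<^sub>R a + u *\<^sub>R c | a c u. 0 \<le> u \<and> u \<le> 1 \<and> a \<in> A \<and> c \<in> C}"
  have "convex hull (A \<union> C) \<subseteq> E"
  proof
    fix z assume "z \<in> convex hull (A \<union> C)"
    then have "z \<in> convex hull \<Union> (id ` {A, C})"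
      by simp
    then obtain w s where "z = (\<Sum>i\<in>{A, C}. w i *\<^sub>R s i)" "\<forall>i\<in>{A, C}. 0 \<le> w i"
        "sum w {A, C} = 1" "\<forall>i\<in>{A, C}. s i \<in> i"
      using False A C by (subst (asm) convex_hull_finite_union) auto
    moreover have "w A = 1 - w C"
      using \<open>sum w {A, C} = 1\<close> False by simp
    ultimately have "z = (1 - w C) *\<^sub>R s A + w C *\<^sub>R s C" "0 \<le> w C" "w C \<le> 1" "s A \<in> A" "s C \<in> C"
      using False by auto
    then show "z \<in> E"
      unfolding E_def by blast
  qed
  moreover have "E \<subseteq> convex hull (A \<union> C)"
  proof
    fix z assume "z \<in> E"
    then obtain a c u where "z = (1 - u) *\<^sub>R a + u *\<^sub>R c" "0 \<le> u" "u \<le> 1" "a \<in> A" "c \<in> C"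
      unfolding E_def by blast
    moreover have "a \<in> convex hull (A \<union> C)" "c \<in> convex hull (A \<union> C)"
      using \<open>a \<in> A\<close> \<open>c \<in> C\<close> by (simp_all add: hull_inc)
    ultimately show "z \<in> convex hull (A \<union> C)"
      using convexD_alt[OF convex_convex_hull] by blast
  qed
  moreover have "compact E"
    unfolding E_def by (rule compact_convex_combinations[OF A(1) C(1)])
  ultimately show ?thesis
    by (simp add: subset_antisym)
qed

lemma compact_convex_hull_Union:
  fixes \<F> :: "'a::real_normed_vector set set"
  assumes "finite \<F>" "\<And>K. K \<in> \<F> \<Longrightarrow> compact K \<and> convex K"
  shows "compact (convex hull (\<Union>\<F>))"
  using assms
proof (induction \<F> rule: finite_induct)
  case (insert A \<F>)
  have "compact A" "convex A"
    using insert.prems[of A] by blast+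
  moreover have "compact (convex hull \<Union>\<F>)"
    using insert.IH insert.prems by blast
  ultimately have "compact (convex hull (A \<union> convex hull \<Union>\<F>))"
    by (intro compact_convex_hull_Un convex_convex_hull)
  then show ?case
    by (simp only: Union_insert flip: hull_Un_right)
qed simp

section \<open>Hahn-Banach by finitely many extension steps\<close>

lemma linear_extend_to_insert:
  fixes f :: "'a::real_vector \<Rightarrow> real"
  assumes "linear f" "z \<notin> span T"
  obtains g where "linear g" "\<And>m. m \<in> span T \<Longrightarrow> g m = f m" "g z = c"
proof -
  obtain C where C: "C \<subseteq> T" "independent C" "T \<subseteq> span C"
    using maximal_independent_subset[of T] by blast
  have span_C: "span C = span T"
    using C span_mono span_span span_subspace subspace_span by metis
  then have "independent (insert z C)"
    using C(2) assms(2) by (simp add: independent_insert)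
  then obtain g where g: "linear g" "\<And>x. x \<in> insert z C \<Longrightarrow> g x = (if x = z then c else f x)"
    using linear_independent_extend[of "insert z C" "\<lambda>x. if x = z then c else f x"] by blast
  have "z \<notin> C"
    using assms(2) C(1) span_base by blast
  then have "g x = f x" if "x \<in> C" for x
    using g(2)[of x] that by auto
  then have "g m = f m" if "m \<in> span T" for m
    using linear_eq_on[OF g(1) assms(1), of m C] that span_C by blast
  with g show thesis
    using that by simp
qed

lemma dominated_along_line:
  fixes f :: "'a::real_normed_vector \<Rightarrow> real"
  assumes f: "linear f" and m: "m \<in> span T" and dom: "\<And>m. m \<in> span T \<Longrightarrow> f m \<le> norm m"
    and plus: "\<And>m. m \<in> span T \<Longrightarrow> f m + c \<le> norm (m + z)"
    and minus: "\<And>m. m \<in> span T \<Longrightarrow> f m - c \<le> norm (m - z)"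
  shows "f m + t * c \<le> norm (m + t *\<^sub>R z)"
proof -
  define u where "u = (1 / \<bar>t\<bar>) *\<^sub>R m"
  have u: "u \<in> span T"
    using m by (simp add: u_def span_scale)
  have fm: "f m = \<bar>t\<bar> * f u" if "t \<noteq> 0"
    using that f by (simp add: u_def linear_scale)
  consider "t = 0" | "t > 0" | "t < 0" by linarith
  then show ?thesis
  proof cases
    case 1
    then show ?thesis using dom[OF m] by simp
  next
    case 2
    then have "m + t *\<^sub>R z = \<bar>t\<bar> *\<^sub>R (u + z)"
      by (simp add: u_def algebra_simps)
    then show ?thesis
      using 2 fm mult_left_mono[OF plus[OF u], of "\<bar>t\<bar>"] by (simp add: distrib_left)
  next
    case 3
    then have "m + t *\<^sub>R z = \<bar>t\<bar> *\<^sub>R (u - z)"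
      by (simp add: u_def algebra_simps)
    then show ?thesis
      using 3 fm mult_left_mono[OF minus[OF u], of "\<bar>t\<bar>"] by (simp add: right_diff_distrib)
  qed
qed

lemma hahn_banach_step:
  fixes f :: "'a::real_normed_vector \<Rightarrow> real"
  assumes f: "linear f" and dom: "\<And>m. m \<in> span T \<Longrightarrow> f m \<le> norm m" and z: "z \<notin> span T"
  obtains g where "linear g" "\<And>m. m \<in> span T \<Longrightarrow> g m = f m"
    "\<And>w. w \<in> span (insert z T) \<Longrightarrow> g w \<le> norm w"
proof -
  define A where "A = {f m - norm (m - z) | m. m \<in> span T}"
  define c where "c = Sup A"
  have sep: "f m1 - norm (m1 - z) \<le> norm (m2 + z) - f m2" if "m1 \<in> span T" "m2 \<in> span T" for m1 m2
  proof -
    have "f m1 + f m2 \<le> norm (m1 + m2)"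
      using dom[of "m1 + m2"] that f by (simp add: span_add linear_add)
    also have "\<dots> \<le> norm (m1 - z) + norm (m2 + z)"
      using norm_triangle_ineq[of "m1 - z" "m2 + z"] by simp
    finally show ?thesis by linarith
  qed
  have "A \<noteq> {}" "bdd_above A"
    unfolding A_def bdd_above_def using sep[OF _ span_zero] span_zero by blast+
  then have minus: "f m - c \<le> norm (m - z)" and plus: "f m + c \<le> norm (m + z)"
    if "m \<in> span T" for m
    unfolding c_def using that cSup_upper[of _ A] cSup_least[of A] sep
    by (force simp: A_def)+
  obtain g where g: "linear g" "\<And>m. m \<in> span T \<Longrightarrow> g m = f m" "g z = c"
    using linear_extend_to_insert[OF f z] by blast
  have "g w \<le> norm w" if "w \<in> span (insert z T)" for w
  proof -
    obtain t m where m: "m \<in> span T" and w: "w = m + t *\<^sub>R z"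
      using \<open>w \<in> span (insert z T)\<close> by (auto simp: span_insert) (metis diff_add_cancel)
    then have "g w = f m + t * c"
      using g by (simp add: linear_add linear_scale)
    then show ?thesis
      using dominated_along_line[OF f m dom plus minus] w by simp
  qed
  with g show thesis
    using that by blast
qed

lemma hahn_banach_finite:
  fixes x :: "'a::real_normed_vector"
  assumes "finite S"
  obtains f where "linear f" "f x = norm x" "\<And>w. w \<in> span (insert x S) \<Longrightarrow> f w \<le> norm w"
proof -
  have "\<exists>f. linear f \<and> f x = norm x \<and> (\<forall>w\<in>span (insert x S). f w \<le> norm w)"
    using assms
  proof (induction S rule: finite_induct)
    case empty
    obtain f where f: "linear f" "f x = norm x"
    proof (cases "x = 0")
      case True
      then show thesis
        using that[of "\<lambda>_. 0"] by (simp add: linear_zero)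
    next
      case False
      then show thesis
        using that linear_extend_to_insert[where f="\<lambda>_. 0" and z=x and T="{}" and c="norm x"]
        by (auto simp: linear_zero)
    qed
    have "f (t *\<^sub>R x) \<le> norm (t *\<^sub>R x)" for t
      using f by (simp add: linear_scale mult_right_mono)
    then show ?case
      using f by (auto simp: span_singleton)
  next
    case (insert z S)
    then obtain f where f: "linear f" "f x = norm x" "\<forall>w\<in>span (insert x S). f w \<le> norm w"
      by blast
    have swap: "span (insert x (insert z S)) = span (insert z (insert x S))"
      by (simp add: insert_commute)
    show ?case
    proof (cases "z \<in> span (insert x S)")
      case True
      then show ?thesis
        using f swap by (metis span_redundant)
    next
      case False
      then obtain g where "linear g" "\<And>m. m \<in> span (insert x S) \<Longrightarrow> g m = f m"
          "\<And>w. w \<in> span (insert z (insert x S)) \<Longrightarrow> g w \<le> norm w"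
        using hahn_banach_step[OF f(1) _ False] f(3) by blast
      then show ?thesis
        using f(2) swap span_base[of x "insert x S"] by (metis insertI1)
    qed
  qed
  then show thesis
    using that by blast
qed

lemma norming_functional_exists:
  fixes x :: "'a::real_normed_vector" and S :: "'a set"
  assumes "finite S" "span S = UNIV" "x \<noteq> 0"
  obtains f where "bounded_linear f" "onorm f = 1" "f x = norm x"
proof -
  obtain f where f: "linear f" "f x = norm x" and le: "\<And>w. f w \<le> norm w"
    using hahn_banach_finite[OF assms(1), of x] assms(2) by (metis UNIV_I span_mono subset_insertI subsetD)
  have abs_le: "\<bar>f w\<bar> \<le> norm w" for w
    using le[of w] le[of "- w"] f(1) by (simp add: linear_neg)
  have bl: "bounded_linear f"
    using f(1) abs_le by (intro bounded_linear_intro[where K=1]) (auto simp: linear_add linear_scale)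
  have "onorm f \<le> 1"
    using abs_le by (intro onorm_bound) auto
  moreover have "norm x \<le> onorm f * norm x"
    using onorm[OF bl, of x] f(2) by simp
  ultimately have "onorm f = 1"
    using assms(3) by simp
  with bl f(2) show thesis
    using that by blast
qed

section \<open>States and the numerical radius\<close>

definition state_pair :: "'a::real_normed_vector \<Rightarrow> ('a \<Rightarrow> real) \<Rightarrow> bool" where
  "state_pair x f \<longleftrightarrow> norm x = 1 \<and> bounded_linear f \<and> onorm f = 1 \<and> f x = 1"

lemma numerical_radius_eq_SUP_states:
  "numerical_radius T = (SUP (x, f) \<in> Collect (case_prod state_pair). \<bar>f (T x)\<bar>)"
proof -
  have "{\<bar>f (T x)\<bar> | x f. state_pair x f} = (\<lambda>(x, f). \<bar>f (T x)\<bar>) ` Collect (case_prod state_pair)"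
    by (auto simp: image_iff)
  then show ?thesis
    unfolding numerical_radius_def state_pair_def by simp
qed

lemma state_pair_uminus: "state_pair x f \<Longrightarrow> state_pair (- x) (\<lambda>w. - f w)"
  unfolding state_pair_def
  by (simp add: bounded_linear_minus onorm_neg linear_neg bounded_linear.linear)

lemma state_pair_sign_normalize:
  fixes h :: "'a::real_normed_vector \<Rightarrow> real"
  assumes "state_pair z0 f" "linear h"
  obtains z g where "state_pair z g" "h z = \<bar>h z0\<bar>" "\<And>w. \<bar>g w\<bar> = \<bar>f w\<bar>"
proof (cases "h z0 \<ge> 0")
  case True
  then show thesis
    using that[OF assms(1)] by simp
next
  case False
  then show thesis
    using that[OF state_pair_uminus[OF assms(1)]] assms(2) by (simp add: linear_neg)
qed

lemma abs_state_le_onorm: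
  assumes "bounded_linear T" "state_pair x f"
  shows "\<bar>f (T x)\<bar> \<le> onorm T"
proof -
  have "\<bar>f (T x)\<bar> \<le> onorm f * norm (T x)"
    using onorm[of f "T x"] assms(2) by (simp add: state_pair_def)
  also have "\<dots> \<le> onorm T * norm x"
    using onorm[OF assms(1), of x] assms(2) by (simp add: state_pair_def)
  finally show ?thesis
    using assms(2) by (simp add: state_pair_def)
qed

lemma bdd_above_states:
  "bounded_linear T \<Longrightarrow> bdd_above ((\<lambda>(x, f). \<bar>f (T x)\<bar>) ` Collect (case_prod state_pair))"
  by (rule bdd_aboveI2[where M="onorm T"]) (use abs_state_le_onorm in fastforce)

lemma state_le_numerical_radius:
  "bounded_linear T \<Longrightarrow> state_pair x f \<Longrightarrow> \<bar>f (T x)\<bar> \<le> numerical_radius T"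
  unfolding numerical_radius_eq_SUP_states
  using cSUP_upper[OF _ bdd_above_states, of "(x, f)"] by simp

lemma numerical_radius_le_onorm:
  fixes T :: "'a::real_normed_vector \<Rightarrow> 'a" and x :: 'a
  assumes "bounded_linear T" "state_pair x f"
  shows "numerical_radius T \<le> onorm T"
proof -
  have "(x, f) \<in> Collect (case_prod state_pair)"
    using assms(2) by simp
  moreover have "\<And>p. p \<in> Collect (case_prod state_pair) \<Longrightarrow> (case p of (x, f) \<Rightarrow> \<bar>f (T x)\<bar>) \<le> onorm T"
    using abs_state_le_onorm[OF assms(1)] by auto
  ultimately show ?thesis
    unfolding numerical_radius_eq_SUP_states by (intro cSUP_least) auto
qed

lemma less_numerical_radius_imp_state:
  fixes T :: "'a::real_normed_vector \<Rightarrow> 'a" and x0 :: 'a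
  assumes "bounded_linear T" "state_pair x0 f0" "\<beta> < numerical_radius T"
  obtains x f where "state_pair x f" "\<beta> < \<bar>f (T x)\<bar>"
proof -
  have "(x0, f0) \<in> Collect (case_prod state_pair)"
    using assms(2) by simp
  then have ne: "Collect (case_prod state_pair) \<noteq> ({} :: ('a \<times> ('a \<Rightarrow> real)) set)"
    by blast
  have "\<beta> < (SUP (x, f) \<in> Collect (case_prod state_pair). \<bar>f (T x)\<bar>)"
    using assms(3) by (simp only: numerical_radius_eq_SUP_states)
  then have "\<exists>p \<in> Collect (case_prod state_pair). \<beta> < (case p of (x, f) \<Rightarrow> \<bar>f (T x)\<bar>)"
    by (simp only: less_cSUP_iff[OF ne bdd_above_states[OF assms(1)]])
  then show thesis
    using that by auto
qed

(* Some state must exist: otherwise numerical_radius and numerical_index are Sup and Inf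
   of empty sets. *)
lemma numerical_index_eq_1_iff:
  fixes x0 :: "'a::real_normed_vector"
  assumes x0: "state_pair x0 f0"
  shows "numerical_index TYPE('a) = 1 \<longleftrightarrow>
    (\<forall>T::'a \<Rightarrow> 'a. bounded_linear T \<longrightarrow> onorm T = 1 \<longrightarrow> 1 \<le> numerical_radius T)"
proof -
  define I where "I = {numerical_radius T | T :: 'a \<Rightarrow> 'a. bounded_linear T \<and> onorm T = 1}"
  have "norm x0 \<le> onorm (\<lambda>x::'a. x) * norm x0"
    by (rule onorm[OF bounded_linear_ident])
  then have "onorm (\<lambda>x::'a. x) = 1"
    using antisym[OF onorm_id_le] x0 by (simp add: state_pair_def)
  then have "I \<noteq> {}"
    unfolding I_def using bounded_linear_ident by blast
  have le_1: "numerical_radius T \<le> 1" if "bounded_linear T" "onorm T = 1" for T :: "'a \<Rightarrow> 'a"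
    using numerical_radius_le_onorm[OF that(1) x0] that(2) by simp
  have "0 \<le> numerical_radius T" if "bounded_linear T" for T :: "'a \<Rightarrow> 'a"
    using state_le_numerical_radius[OF that x0] abs_ge_zero order_trans by blast
  then have "bdd_below I"
    unfolding I_def bdd_below_def by blast
  show ?thesis
  proof
    assume "numerical_index TYPE('a) = 1"
    then have "Inf I = 1"
      unfolding numerical_index_def I_def by simp
    moreover have "Inf I \<le> numerical_radius T" if "bounded_linear T" "onorm T = 1" for T :: "'a \<Rightarrow> 'a"
      using that by (intro cInf_lower[OF _ \<open>bdd_below I\<close>]) (auto simp: I_def)
    ultimately have "1 \<le> numerical_radius T" if "bounded_linear T" "onorm T = 1" for T :: "'a \<Rightarrow> 'a"
      using that by simp
    then show "\<forall>T::'a \<Rightarrow> 'a. bounded_linear T \<longrightarrow> onorm T = 1 \<longrightarrow> 1 \<le> numerical_radius T"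
      by blast
  next
    assume "\<forall>T::'a \<Rightarrow> 'a. bounded_linear T \<longrightarrow> onorm T = 1 \<longrightarrow> 1 \<le> numerical_radius T"
    then have "I \<subseteq> {1}"
      using le_1 unfolding I_def by (blast intro: antisym)
    then have "I = {1}"
      using \<open>I \<noteq> {}\<close> by blast
    then show "numerical_index TYPE('a) = 1"
      unfolding numerical_index_def I_def by simp
  qed
qed

section \<open>Finite-dimensional normed spaces\<close>

locale finite_basis =
  fixes B :: "'a::real_normed_vector set"
  assumes finite_B: "finite B" and independent_B: "independent B" and span_B: "span B = UNIV"
begin

definition coord :: "'a \<Rightarrow> 'a \<Rightarrow> real" where
  "coord b x = representation B x b"

lemma linear_coord: "linear (coord b)"
proof -
  have "Vector_Spaces.linear (*\<^sub>R) (*) (\<lambda>x. representation B x b)"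
    using real_vector.linear_representation independent_B span_B by blast
  then show ?thesis
    unfolding coord_def linear_def real_scaleR_def[abs_def] .
qed

lemma coord_expansion: "(\<Sum>b\<in>B. coord b x *\<^sub>R b) = x"
  unfolding coord_def using sum_representation_eq[OF independent_B _ finite_B] span_B by simp

lemma coord_outside: "b \<notin> B \<Longrightarrow> coord b x = 0"
  unfolding coord_def using representation_ne_zero by blast

lemma coord_lincomb: "b \<in> B \<Longrightarrow> coord b (\<Sum>i\<in>B. c i *\<^sub>R i) = c b"
proof -
  assume b: "b \<in> B"
  have "coord b (\<Sum>i\<in>B. c i *\<^sub>R i) = (\<Sum>i\<in>B. c i * coord b i)"
    using linear_coord[of b] by (simp add: linear_sum linear_scale)
  also have "\<dots> = (\<Sum>i\<in>B. if i = b then c i else 0)"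
    by (rule sum.cong) (auto simp: coord_def representation_basis[OF independent_B])
  also have "\<dots> = c b"
    using b finite_B by simp
  finally show ?thesis .
qed

(* Coordinate vectors live in the product space 'a => real and vanish off B, so that
   compactness of coordinate boxes is Tychonoff's theorem. *)
definition coord_box :: "real \<Rightarrow> ('a \<Rightarrow> real) set" where
  "coord_box R = PiE UNIV (\<lambda>i. if i \<in> B then {-R..R} else {0})"

lemma compact_coord_box: "compact (coord_box R)"
proof -
  have "compactin (product_topology (\<lambda>i. euclidean) UNIV) (coord_box R)"
    unfolding coord_box_def compactin_PiE by (auto simp: compactin_euclidean_iff)
  then show ?thesis
    by (simp add: euclidean_product_topology compactin_euclidean_iff)
qed

lemma mem_coord_box_iff:
  "c \<in> coord_box R \<longleftrightarrow> (\<forall>i. (i \<in> B \<longrightarrow> \<bar>c i\<bar> \<le> R) \<and> (i \<notin> B \<longrightarrow> c i = 0))"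
  unfolding coord_box_def by (auto simp: PiE_iff abs_le_iff)

lemma continuous_on_component: "continuous_on S (\<lambda>c::'a \<Rightarrow> real. c i)"
  by (rule continuous_on_subset[OF continuous_on_product_coordinates]) simp

lemma continuous_on_lincomb: "continuous_on S (\<lambda>c. \<Sum>b\<in>B. c b *\<^sub>R b)"
  by (intro continuous_on_sum continuous_on_scaleR continuous_on_component continuous_on_const)

lemma lincomb_norm_bounded_below_on_sphere:
  "\<exists>m>0. \<forall>c \<in> coord_box 1 \<inter> {c. (\<Sum>i\<in>B. \<bar>c i\<bar>) = 1}. m \<le> norm (\<Sum>b\<in>B. c b *\<^sub>R b)"
proof (cases "coord_box 1 \<inter> {c. (\<Sum>i\<in>B. \<bar>c i\<bar>) = 1} = {}")
  case True
  then show ?thesis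
    using zero_less_one by blast
next
  case False
  define S where "S = coord_box 1 \<inter> {c. (\<Sum>i\<in>B. \<bar>c i\<bar>) = 1}"
  have "compact S"
    unfolding S_def
    by (intro compact_Int_closed compact_coord_box closed_Collect_eq continuous_on_sum
        continuous_on_const continuous_on_rabs continuous_on_component)
  moreover have "continuous_on S (\<lambda>c. norm (\<Sum>b\<in>B. c b *\<^sub>R b))"
    by (intro continuous_on_norm continuous_on_lincomb)
  ultimately obtain c0 where c0: "c0 \<in> S" and min: "\<forall>c\<in>S. norm (\<Sum>b\<in>B. c0 b *\<^sub>R b) \<le> norm (\<Sum>b\<in>B. c b *\<^sub>R b)"
    using continuous_attains_inf[of S] False unfolding S_def by blast
  have "(\<Sum>b\<in>B. c0 b *\<^sub>R b) \<noteq> 0"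
  proof
    assume "(\<Sum>b\<in>B. c0 b *\<^sub>R b) = 0"
    then have "c0 i = 0" if "i \<in> B" for i
      using coord_lincomb[OF that, of c0] linear_coord[of i] by (simp add: linear_0)
    then show False
      using c0 by (simp add: S_def)
  qed
  then show ?thesis
    using min unfolding S_def by (intro exI[of _ "norm (\<Sum>b\<in>B. c0 b *\<^sub>R b)"]) simp
qed

lemma lincomb_norm_lower_bound:
  "\<exists>m>0. \<forall>c. (\<forall>i. i \<notin> B \<longrightarrow> c i = 0) \<longrightarrow> m * (\<Sum>i\<in>B. \<bar>c i\<bar>) \<le> norm (\<Sum>b\<in>B. c b *\<^sub>R b)"
proof -
  obtain m where "m > 0" and min: "\<And>c. c \<in> coord_box 1 \<Longrightarrow> (\<Sum>i\<in>B. \<bar>c i\<bar>) = 1 \<Longrightarrow> m \<le> norm (\<Sum>b\<in>B. c b *\<^sub>R b)"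
    using lincomb_norm_bounded_below_on_sphere by blast
  have "m * (\<Sum>i\<in>B. \<bar>c i\<bar>) \<le> norm (\<Sum>b\<in>B. c b *\<^sub>R b)" if out: "\<forall>i. i \<notin> B \<longrightarrow> c i = 0" for c
  proof (cases "(\<Sum>i\<in>B. \<bar>c i\<bar>) = 0")
    case False
    define s where "s = (\<Sum>i\<in>B. \<bar>c i\<bar>)"
    have s: "s > 0"
      using False by (simp add: s_def sum_nonneg order_less_le)
    have "\<bar>c i\<bar> \<le> s" if "i \<in> B" for i
      unfolding s_def using that finite_B by (intro member_le_sum) simp_all
    then have "(\<lambda>i. c i / s) \<in> coord_box 1"
      using s out by (simp add: mem_coord_box_iff)
    moreover have "(\<Sum>i\<in>B. \<bar>c i / s\<bar>) = 1"
      using s by (simp add: s_def sum_divide_distrib[symmetric])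
    ultimately have "m \<le> norm (\<Sum>b\<in>B. (c b / s) *\<^sub>R b)"
      by (rule min)
    also have "(\<Sum>b\<in>B. (c b / s) *\<^sub>R b) = (1 / s) *\<^sub>R (\<Sum>b\<in>B. c b *\<^sub>R b)"
      by (simp add: scaleR_sum_right divide_inverse_commute)
    finally show ?thesis
      using s by (simp add: s_def field_simps)
  qed simp
  with \<open>m > 0\<close> show ?thesis
    by blast
qed

lemma coord_bound: obtains K where "K > 0" "\<And>x b. \<bar>coord b x\<bar> \<le> K * norm x"
proof -
  obtain m where m: "m > 0"
    "\<And>c. \<forall>i. i \<notin> B \<longrightarrow> c i = 0 \<Longrightarrow> m * (\<Sum>i\<in>B. \<bar>c i\<bar>) \<le> norm (\<Sum>b\<in>B. c b *\<^sub>R b)"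
    using lincomb_norm_lower_bound by blast
  have "\<bar>coord b x\<bar> \<le> (1 / m) * norm x" for b x
  proof (cases "b \<in> B")
    case True
    have "m * \<bar>coord b x\<bar> \<le> m * (\<Sum>i\<in>B. \<bar>coord i x\<bar>)"
      using True finite_B m(1) member_le_sum[of b B "\<lambda>i. \<bar>coord i x\<bar>"] by simp
    also have "\<dots> \<le> norm x"
      using m(2)[of "\<lambda>i. coord i x"] coord_outside coord_expansion by simp
    finally show ?thesis
      using m(1) by (simp add: field_simps)
  qed (use m(1) in \<open>simp add: coord_outside\<close>)
  with m(1) show thesis
    using that[of "1 / m"] by simp
qed

lemma linear_imp_bounded_linear:
  fixes f :: "'a \<Rightarrow> 'b::real_normed_vector"
  assumes f: "linear f"
  shows "bounded_linear f"
proof -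
  obtain K where K: "K > 0" "\<And>x b. \<bar>coord b x\<bar> \<le> K * norm x"
    using coord_bound by blast
  have "norm (f x) \<le> norm x * (K * (\<Sum>b\<in>B. norm (f b)))" for x
  proof -
    have "f x = (\<Sum>b\<in>B. coord b x *\<^sub>R f b)"
      using f coord_expansion[of x] by (metis (no_types, lifting) linear_scale linear_sum sum.cong)
    then have "norm (f x) \<le> (\<Sum>b\<in>B. norm (coord b x *\<^sub>R f b))"
      by (metis norm_sum)
    also have "\<dots> = (\<Sum>b\<in>B. \<bar>coord b x\<bar> * norm (f b))"
      by simp
    also have "\<dots> \<le> (\<Sum>b\<in>B. K * norm x * norm (f b))"
      by (intro sum_mono mult_right_mono K(2)) simp
    finally show ?thesis
      by (simp add: sum_distrib_left mult_ac)
  qed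
  then show ?thesis
    using f by (intro bounded_linear_intro) (auto simp: linear_add linear_scale)
qed

lemma compact_closed_bounded:
  fixes S :: "'a set"
  assumes "closed S" "bounded S"
  shows "compact S"
proof -
  obtain r where r: "\<And>x. x \<in> S \<Longrightarrow> norm x \<le> r"
    using assms(2) bounded_pos by blast
  obtain K where K: "K > 0" "\<And>x b. \<bar>coord b x\<bar> \<le> K * norm x"
    using coord_bound by blast
  have "S \<subseteq> (\<lambda>c. \<Sum>b\<in>B. c b *\<^sub>R b) ` coord_box (K * r)"
  proof
    fix x assume "x \<in> S"
    then have "K * norm x \<le> K * r"
      using r K(1) by (simp add: mult_left_mono)
    then have "\<bar>coord i x\<bar> \<le> K * r" for i
      using K(2)[of i x] by linarith
    then have "(\<lambda>i. if i \<in> B then coord i x else 0) \<in> coord_box (K * r)"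
      by (simp add: mem_coord_box_iff)
    then show "x \<in> (\<lambda>c. \<Sum>b\<in>B. c b *\<^sub>R b) ` coord_box (K * r)"
      by (rule rev_image_eqI) (simp add: coord_expansion)
  qed
  then have "(\<lambda>c. \<Sum>b\<in>B. c b *\<^sub>R b) ` coord_box (K * r) \<inter> S = S"
    by blast
  moreover have "compact ((\<lambda>c. \<Sum>b\<in>B. c b *\<^sub>R b) ` coord_box (K * r) \<inter> S)"
    by (intro compact_Int_closed compact_continuous_image continuous_on_lincomb compact_coord_box assms(1))
  ultimately show ?thesis
    by simp
qed

(* An auxiliary Euclidean structure: strict convexity of its square norm produces
   extreme points of compact sets and nearest points in compact convex sets. *)
definition coord_inner :: "'a \<Rightarrow> 'a \<Rightarrow> real" where
  "coord_inner u v = (\<Sum>b\<in>B. coord b u * coord b v)"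

lemma linear_coord_inner: "linear (coord_inner w)"
  using linear_coord
  by (intro linearI) (simp_all add: coord_inner_def linear_add linear_scale sum.distrib distrib_left sum_distrib_left mult_ac)

lemma coord_inner_self_pos:
  assumes "u \<noteq> 0"
  shows "coord_inner u u > 0"
proof -
  obtain b where b: "b \<in> B" "coord b u \<noteq> 0"
    using assms coord_expansion[of u] by (metis (no_types, lifting) scaleR_eq_0_iff sum.neutral)
  have "coord b u * coord b u \<le> coord_inner u u"
    unfolding coord_inner_def using b(1) finite_B by (intro member_le_sum) simp_all
  moreover have "coord b u * coord b u > 0"
    using b(2) not_real_square_gt_zero by blast
  ultimately show ?thesis
    by linarith
qed

lemma coord_inner_diff_scale:
  "coord_inner (w - t *\<^sub>R v) (w - t *\<^sub>R v) = coord_inner w w - 2 * t * coord_inner w v + t\<^sup>2 * coord_inner v v"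
  using linear_coord
  by (simp add: coord_inner_def linear_diff linear_scale power2_eq_square algebra_simps
      sum.distrib sum_subtractf sum_distrib_left)

lemma coord_inner_convex_combination:
  "coord_inner ((1 - u) *\<^sub>R a + u *\<^sub>R c) ((1 - u) *\<^sub>R a + u *\<^sub>R c) =
    (1 - u) * coord_inner a a + u * coord_inner c c - u * (1 - u) * coord_inner (a - c) (a - c)"
  using linear_coord
  by (simp add: coord_inner_def linear_add linear_diff linear_scale algebra_simps
      sum.distrib sum_subtractf sum_distrib_left)

lemma continuous_on_coord_inner_self: "continuous_on S (\<lambda>u. coord_inner u u)"
  unfolding coord_inner_def
  by (intro continuous_on_sum continuous_on_mult linear_continuous_on linear_imp_bounded_linear linear_coord)

lemma extreme_point_exists:
  fixes F :: "'a set"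
  assumes "compact F" "F \<noteq> {}"
  obtains y where "y extreme_point_of F"
proof -
  obtain y where y: "y \<in> F" and max: "\<And>z. z \<in> F \<Longrightarrow> coord_inner z z \<le> coord_inner y y"
    using continuous_attains_sup[OF assms continuous_on_coord_inner_self] by blast
  have "y \<notin> open_segment a c" if a: "a \<in> F" and c: "c \<in> F" for a c
  proof
    assume "y \<in> open_segment a c"
    then obtain u where u: "a \<noteq> c" "0 < u" "u < 1" and y_eq: "y = (1 - u) *\<^sub>R a + u *\<^sub>R c"
      by (auto simp: in_segment)
    have "0 < u * (1 - u) * coord_inner (a - c) (a - c)"
      using u coord_inner_self_pos[of "a - c"] by simp
    moreover have "(1 - u) * coord_inner a a \<le> (1 - u) * coord_inner y y" "u * coord_inner c c \<le> u * coord_inner y y"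
      using max[OF a] max[OF c] u by (simp_all add: mult_left_mono)
    moreover have "coord_inner y y = (1 - u) * coord_inner a a + u * coord_inner c c
        - u * (1 - u) * coord_inner (a - c) (a - c)"
      unfolding y_eq by (rule coord_inner_convex_combination)
    ultimately have "coord_inner y y < (1 - u) * coord_inner y y + u * coord_inner y y"
      by linarith
    then show False
      by (simp add: algebra_simps)
  qed
  then have "y extreme_point_of F"
    using y by (simp add: extreme_point_of_def)
  then show thesis
    by (rule that)
qed

lemma nearest_point_variational_inequality:
  fixes D :: "'a set"
  assumes "convex D" "q \<in> D" "d \<in> D"
    and min: "\<And>d. d \<in> D \<Longrightarrow> coord_inner (x - q) (x - q) \<le> coord_inner (x - d) (x - d)"
  shows "coord_inner (x - q) (d - q) \<le> 0"
proof (rule ccontr)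
  define w v where "w = x - q" and "v = d - q"
  assume "\<not> coord_inner (x - q) (d - q) \<le> 0"
  then have pos: "coord_inner w v > 0"
    by (simp add: w_def v_def)
  then have "v \<noteq> 0"
    using linear_coord_inner[of w] by (auto simp: linear_0)
  then have Qv: "coord_inner v v > 0"
    by (rule coord_inner_self_pos)
  define t where "t = min 1 (coord_inner w v / coord_inner v v)"
  have t: "0 < t" "t \<le> 1" "t * coord_inner v v \<le> coord_inner w v"
    using pos Qv by (auto simp: t_def min_def field_simps)
  have "q + t *\<^sub>R v = (1 - t) *\<^sub>R q + t *\<^sub>R d"
    by (simp add: v_def algebra_simps)
  then have "q + t *\<^sub>R v \<in> D"
    using assms(1-3) t by (simp add: convex_alt)
  then have "coord_inner w w \<le> coord_inner (w - t *\<^sub>R v) (w - t *\<^sub>R v)"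
    using min[of "q + t *\<^sub>R v"] by (simp add: w_def algebra_simps)
  then have "2 * t * coord_inner w v \<le> t * (t * coord_inner v v)"
    by (simp add: coord_inner_diff_scale power2_eq_square mult_ac)
  then have "2 * coord_inner w v \<le> t * coord_inner v v"
    using t(1) by simp
  then show False
    using t(3) pos by simp
qed

lemma separation_compact_convex:
  fixes D :: "'a set"
  assumes "compact D" "convex D" "D \<noteq> {}" "x \<notin> D"
  obtains g \<alpha> where "bounded_linear (g :: 'a \<Rightarrow> real)" "onorm g = 1"
    "\<And>d. d \<in> D \<Longrightarrow> g d \<le> \<alpha>" "\<alpha> < g x"
proof -
  have "continuous_on D (\<lambda>d. coord_inner (x - d) (x - d))"
    by (rule continuous_on_compose2[OF continuous_on_coord_inner_self]) (auto intro: continuous_on_diff continuous_on_const continuous_on_id)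
  then obtain q where q: "q \<in> D" and min: "\<And>d. d \<in> D \<Longrightarrow> coord_inner (x - q) (x - q) \<le> coord_inner (x - d) (x - d)"
    using continuous_attains_inf[OF assms(1,3)] by blast
  define h where "h = coord_inner (x - q)"
  have h: "bounded_linear h"
    unfolding h_def by (intro linear_imp_bounded_linear linear_coord_inner)
  have le: "h d \<le> h q" if "d \<in> D" for d
    using nearest_point_variational_inequality[OF assms(2) q that min] linear_coord_inner
    by (simp add: h_def linear_diff)
  have "x \<noteq> q"
    using q assms(4) by blast
  then have less: "h q < h x"
    using coord_inner_self_pos[of "x - q"] linear_coord_inner by (simp add: h_def linear_diff)
  then have "onorm h \<noteq> 0"
    using h onorm_eq_0 by fastforce
  then have N: "onorm h > 0"
    using onorm_pos_le[OF h] by simp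
  define g where "g y = h y / onorm h" for y
  have "bounded_linear g"
    unfolding g_def by (rule bounded_linear_compose[OF bounded_linear_divide h])
  moreover have "onorm g = 1"
    using onorm_scaleR[OF h, of "1 / onorm h"] N by (simp add: g_def[abs_def] divide_inverse_commute)
  moreover have "g d \<le> h q / onorm h" if "d \<in> D" for d
    using le[OF that] N by (simp add: g_def divide_right_mono)
  moreover have "h q / onorm h < g x"
    using less N by (simp add: g_def divide_strict_right_mono)
  ultimately show thesis
    by (rule that)
qed

section \<open>Extreme points, slices and parallel pairs\<close>

lemma norming_functional:
  fixes x :: 'a
  assumes "x \<noteq> 0"
  obtains f where "bounded_linear f" "onorm f = 1" "f x = norm x"
  using norming_functional_exists[OF finite_B span_B assms] by blast

lemma onorm_attained:
  fixes T :: "'a \<Rightarrow> 'b::real_normed_vector"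
  assumes T: "bounded_linear T"
  obtains x where "norm x \<le> 1" "norm (T x) = onorm T"
proof -
  have "compact (cball (0::'a) 1)"
    by (intro compact_closed_bounded) simp_all
  moreover have "continuous_on (cball 0 1) (\<lambda>x. norm (T x))"
    by (intro continuous_on_norm linear_continuous_on T)
  ultimately obtain x where x: "x \<in> cball 0 1" and max: "\<And>z. z \<in> cball 0 1 \<Longrightarrow> norm (T z) \<le> norm (T x)"
    using continuous_attains_sup[of "cball 0 1" "\<lambda>x. norm (T x)"] by force
  have "onorm T \<le> norm (T x)"
  proof (rule onorm_bound)
    fix z :: 'a
    show "norm (T z) \<le> norm (T x) * norm z"
    proof (cases "z = 0")
      case False
      have "norm (T ((1 / norm z) *\<^sub>R z)) \<le> norm (T x)"
        using False by (intro max) simp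
      then show ?thesis
        using False T by (simp add: linear_scale bounded_linear.linear field_simps)
    qed (simp add: T bounded_linear.linear linear_0)
  qed simp
  moreover have "norm (T x) \<le> onorm T"
    using norm_le_onorm_if_norm_le_1[OF T] x by simp
  ultimately show thesis
    using that x by simp
qed

lemma extreme_point_of_supporting_face:
  fixes \<phi> :: "'a \<Rightarrow> real"
  assumes \<phi>: "linear \<phi>" and le: "\<And>z. z \<in> cball 0 1 \<Longrightarrow> \<phi> z \<le> c"
    and x: "norm x \<le> 1" "\<phi> x = c"
  obtains y where "y extreme_point_of cball 0 1" "\<phi> y = c"
proof -
  define F where "F = cball 0 1 \<inter> {z. \<phi> z = c}"
  have face: "F face_of cball 0 1"
    unfolding F_def by (rule face_of_supporting_functional[OF convex_cball \<phi> le])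
  have "closed F"
    unfolding F_def using \<phi>
    by (intro closed_Int closed_cball closed_Collect_eq continuous_on_const
        linear_continuous_on linear_imp_bounded_linear)
  then have "compact F"
    by (intro compact_closed_bounded) (auto simp: F_def intro: bounded_subset[OF bounded_cball])
  moreover have "x \<in> F"
    using x by (simp add: F_def)
  ultimately obtain y where "y extreme_point_of F"
    using extreme_point_exists by blast
  then have "y extreme_point_of cball 0 1" "y \<in> F"
    using extreme_point_of_face[OF face] by blast+
  then show thesis
    using that by (simp add: F_def)
qed

lemma onorm_attained_at_extreme_point:
  fixes T :: "'a \<Rightarrow> 'a"
  assumes T: "bounded_linear T"
  obtains y where "y extreme_point_of cball 0 1" "norm (T y) = onorm T"
proof (cases "onorm T = 0")
  case True
  have "compact (cball (0::'a) 1)"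
    by (intro compact_closed_bounded) simp_all
  then obtain y where "y extreme_point_of cball (0::'a) 1"
    using extreme_point_exists by fastforce
  moreover have "norm (T y) = 0"
    using onorm[OF T, of y] True by simp
  ultimately show thesis
    using True that by simp
next
  case False
  obtain x where x: "norm x \<le> 1" "norm (T x) = onorm T"
    using onorm_attained[OF T] by blast
  with False obtain g where g: "bounded_linear g" "onorm g = 1" "g (T x) = onorm T"
    using norming_functional[of "T x"] by force
  have g_le: "g w \<le> norm w" for w
    using abs_le_norm_if_onorm_le_1[OF g(1), of w] g(2) by simp
  have "linear (\<lambda>z. g (T z))"
    using bounded_linear_compose[OF g(1) T] bounded_linear.linear by blast
  moreover have "g (T z) \<le> onorm T" if "z \<in> cball 0 1" for z
    using g_le[of "T z"] norm_le_onorm_if_norm_le_1[OF T, of z] that by simp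
  ultimately obtain y where y: "y extreme_point_of cball 0 1" "g (T y) = onorm T"
    using x(1) g(3) by (rule extreme_point_of_supporting_face)
  moreover have "norm y \<le> 1"
    using y(1) by (simp add: extreme_point_of_def)
  ultimately have "norm (T y) = onorm T"
    using g_le[of "T y"] norm_le_onorm_if_norm_le_1[OF T, of y] by simp
  with y(1) show thesis
    by (rule that)
qed

lemma far_points_hull_avoids_extreme_point:
  fixes x :: 'a
  assumes x: "x extreme_point_of cball 0 1" and "\<epsilon> > 0"
  obtains D where "compact D" "convex D" "cball 0 1 - ball x \<epsilon> \<subseteq> D" "x \<notin> D"
proof -
  define S where "S = cball (0::'a) 1 - ball x \<epsilon>"
  have "compact S"
    unfolding S_def by (intro compact_closed_bounded closed_Diff bounded_diff) simp_all
  then obtain C where C: "finite C" "C \<subseteq> S" "S \<subseteq> (\<Union>p\<in>C. ball p (\<epsilon> / 2))"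
    using seq_compact_imp_totally_bounded[OF compact_imp_seq_compact, rule_format, of S "\<epsilon> / 2"]
      \<open>\<epsilon> > 0\<close> by auto
  define K where "K p = cball 0 1 \<inter> cball p (\<epsilon> / 2)" for p :: 'a
  define D where "D = convex hull (\<Union>p\<in>C. K p)"
  have "compact (K p) \<and> convex (K p)" for p
    unfolding K_def by (intro conjI compact_closed_bounded closed_Int bounded_Int convex_Int) simp_all
  then have "compact D"
    unfolding D_def using C(1) by (intro compact_convex_hull_Union) blast+
  moreover have "convex D"
    unfolding D_def by (rule convex_convex_hull)
  moreover have "S \<subseteq> D"
  proof
    fix z assume "z \<in> S"
    then obtain p where "p \<in> C" "z \<in> ball p (\<epsilon> / 2)"
      using C(3) by blast
    then have "z \<in> K p"
      using \<open>z \<in> S\<close> by (auto simp: K_def S_def)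
    then have "z \<in> (\<Union>p\<in>C. K p)"
      using \<open>p \<in> C\<close> by blast
    then show "z \<in> D"
      unfolding D_def by (rule hull_inc)
  qed
  moreover have "x \<notin> D"
  proof
    assume "x \<in> D"
    moreover have "(\<Union>p\<in>C. K p) \<subseteq> cball 0 1"
      by (auto simp: K_def)
    ultimately have "x \<in> (\<Union>p\<in>C. K p)"
      unfolding D_def by (rule extreme_point_in_subset_of_convex_hull[OF x convex_cball])
    then obtain p where "p \<in> C" "dist p x \<le> \<epsilon> / 2"
      by (auto simp: K_def)
    moreover have "\<epsilon> \<le> dist x p"
      using \<open>p \<in> C\<close> C(2) by (auto simp: S_def)
    ultimately show False
      using \<open>\<epsilon> > 0\<close> by (simp add: dist_commute)
  qed
  ultimately show thesis
    unfolding S_def by (rule that)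
qed

lemma extreme_point_small_slice:
  fixes x :: 'a
  assumes x: "x extreme_point_of cball 0 1" and "norm x = 1" and "\<epsilon> > 0"
  obtains h \<delta> where "bounded_linear (h :: 'a \<Rightarrow> real)" "onorm h = 1" "\<delta> > 0"
    "\<And>z. norm z \<le> 1 \<Longrightarrow> 1 - \<delta> < h z \<Longrightarrow> norm (z - x) < \<epsilon>"
proof -
  obtain D where D: "compact D" "convex D" "cball 0 1 - ball x \<epsilon> \<subseteq> D" "x \<notin> D"
    using far_points_hull_avoids_extreme_point[OF x \<open>\<epsilon> > 0\<close>] by blast
  have close: "norm (z - x) < \<epsilon>" if "norm z \<le> 1" "z \<notin> D" for z
    using that D(3) by (auto simp: dist_norm norm_minus_commute)
  show thesis
  proof (cases "D = {}")
    case True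
    obtain h where "bounded_linear (h :: 'a \<Rightarrow> real)" "onorm h = 1" "h x = norm x"
      using norming_functional[of x] \<open>norm x = 1\<close> by force
    then show thesis
      using that[of h 1] close True by simp
  next
    case False
    obtain g \<alpha> where g: "bounded_linear (g :: 'a \<Rightarrow> real)" "onorm g = 1" "\<And>d. d \<in> D \<Longrightarrow> g d \<le> \<alpha>" "\<alpha> < g x"
      using separation_compact_convex[OF D(1,2) False D(4)] by blast
    have "g x \<le> 1"
      using abs_le_norm_if_onorm_le_1[OF g(1), of x] g(2) \<open>norm x = 1\<close> by simp
    then have "1 - \<alpha> > 0"
      using g(4) by simp
    moreover have "norm (z - x) < \<epsilon>" if "norm z \<le> 1" "1 - (1 - \<alpha>) < g z" for z
    proof -
      have "z \<notin> D"
        using g(3)[of z] that(2) by auto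
      then show ?thesis
        by (rule close[OF that(1)])
    qed
    ultimately show thesis
      by (rule that[OF g(1,2)])
  qed
qed

lemma state_pair_exists:
  fixes e :: 'a
  assumes "e \<noteq> 0"
  obtains x f where "state_pair (x :: 'a) f"
proof -
  define x where "x = (1 / norm e) *\<^sub>R e"
  have "norm x = 1"
    using assms by (simp add: x_def)
  moreover obtain f where "bounded_linear f" "onorm f = 1" "f x = norm x"
    using norming_functional[of x] \<open>norm x = 1\<close> by force
  ultimately show thesis
    using that[of x f] by (simp add: state_pair_def)
qed

lemma parallel_pair_imp_state:
  fixes x y :: 'a
  assumes "parallel_pair x y" "norm x = 1" "norm y = 1"
  obtains f where "state_pair x f" "\<bar>f y\<bar> = 1"
proof -
  obtain l :: real where l: "\<bar>l\<bar> = 1" "norm (x + l *\<^sub>R y) = 2"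
    using assms unfolding parallel_pair_def by auto
  then obtain f :: "'a \<Rightarrow> real" where f: "bounded_linear f" "onorm f = 1" "f (x + l *\<^sub>R y) = 2"
    using norming_functional[of "x + l *\<^sub>R y"] by force
  have "f x \<le> 1" "l * f y \<le> 1"
    using abs_le_norm_if_onorm_le_1[OF f(1)] f(2) assms(2,3) l(1)
    by (metis abs_le_D1 order_refl, metis abs_le_D1 abs_mult mult_1 order_refl)
  moreover have "f x + l * f y = 2"
    using f(1,3) by (simp add: linear_add linear_scale bounded_linear.linear)
  ultimately have "f x = 1" "l * f y = 1"
    by linarith+
  moreover have "\<bar>l\<bar> * \<bar>f y\<bar> = 1"
    using \<open>l * f y = 1\<close> by (metis abs_mult abs_one)
  ultimately have "state_pair x f" "\<bar>f y\<bar> = 1"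
    using f(1,2) assms(2) l(1) by (simp_all add: state_pair_def)
  then show thesis
    by (rule that)
qed

lemma parallel_imp_numerical_radius_ge_1:
  fixes T :: "'a \<Rightarrow> 'a"
  assumes parallel: "\<forall>x y :: 'a. x extreme_point_of cball 0 1 \<longrightarrow> norm y = 1 \<longrightarrow> parallel_pair x y"
    and T: "bounded_linear T" "onorm T = 1"
  shows "1 \<le> numerical_radius T"
proof -
  obtain y where y: "y extreme_point_of cball 0 1" "norm (T y) = 1"
    using onorm_attained_at_extreme_point[OF T(1)] T(2) by metis
  have "norm y \<le> 1"
    using y(1) by (simp add: extreme_point_of_def)
  moreover have "1 \<le> norm y"
    using onorm[OF T(1), of y] T(2) y(2) by simp
  ultimately have "norm y = 1"
    by simp
  then obtain f where "state_pair y f" "\<bar>f (T y)\<bar> = 1"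
    using parallel_pair_imp_state parallel y by metis
  then show ?thesis
    using state_le_numerical_radius[OF T(1)] by metis
qed

lemma rank_one_almost_norming_state:
  fixes h :: "'a \<Rightarrow> real" and y :: 'a
  assumes radius: "\<forall>T::'a \<Rightarrow> 'a. bounded_linear T \<longrightarrow> onorm T = 1 \<longrightarrow> 1 \<le> numerical_radius T"
    and h: "bounded_linear h" "onorm h = 1" and y: "norm y = 1" and "\<eta> > 0"
  obtains z g where "state_pair z g" "1 - \<eta> < h z" "1 - \<eta> < \<bar>g y\<bar>"
proof -
  define T where "T z = h z *\<^sub>R y" for z
  have T: "bounded_linear T" "onorm T = 1"
    using h y onorm_scaleR_left[OF h(1), of y]
    by (simp_all add: T_def[abs_def] bounded_linear_scaleR_const)
  have "y \<noteq> 0"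
    using y by auto
  then obtain x0 f0 where "state_pair (x0 :: 'a) f0"
    by (rule state_pair_exists)
  moreover have "1 - \<eta> < numerical_radius T"
    using radius T \<open>\<eta> > 0\<close> by force
  ultimately obtain z0 f where z0: "state_pair z0 f" "1 - \<eta> < \<bar>f (T z0)\<bar>"
    using less_numerical_radius_imp_state[OF T(1)] by blast
  obtain z g where zg: "state_pair z g" "h z = \<bar>h z0\<bar>" "\<bar>g y\<bar> = \<bar>f y\<bar>"
    using state_pair_sign_normalize[OF z0(1) bounded_linear.linear[OF h(1)]] by metis
  have "h z \<le> 1"
    using abs_le_norm_if_onorm_le_1[OF h(1), of z] h(2) zg(1) by (simp add: state_pair_def)
  moreover have "\<bar>g y\<bar> \<le> 1"
    using abs_le_norm_if_onorm_le_1[of g y] zg(1) y by (simp add: state_pair_def)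
  moreover have "1 - \<eta> < h z * \<bar>g y\<bar>"
    using z0 zg(2,3)
    by (simp add: T_def state_pair_def linear_scale bounded_linear.linear abs_mult)
  moreover have "0 \<le> h z"
    using zg(2) by simp
  ultimately have "1 - \<eta> < h z" "1 - \<eta> < \<bar>g y\<bar>"
    using mult_left_le[of "\<bar>g y\<bar>" "h z"] mult_left_le_one_le[of "\<bar>g y\<bar>" "h z"] by simp_all
  with zg(1) show thesis
    by (rule that)
qed

lemma numerical_radius_ge_1_imp_almost_parallel:
  fixes x y :: 'a
  assumes radius: "\<forall>T::'a \<Rightarrow> 'a. bounded_linear T \<longrightarrow> onorm T = 1 \<longrightarrow> 1 \<le> numerical_radius T"
    and x: "x extreme_point_of cball 0 1" "norm x = 1" and y: "norm y = 1" and "\<epsilon> > 0"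
  shows "2 - 2 * \<epsilon> < max (norm (x + y)) (norm (x - y))"
proof -
  obtain h \<delta> where h: "bounded_linear (h :: 'a \<Rightarrow> real)" "onorm h = 1" and "\<delta> > 0"
    and slice: "\<And>z. norm z \<le> 1 \<Longrightarrow> 1 - \<delta> < h z \<Longrightarrow> norm (z - x) < \<epsilon>"
    using extreme_point_small_slice[OF x \<open>\<epsilon> > 0\<close>] by blast
  have "min \<delta> \<epsilon> > 0"
    using \<open>\<delta> > 0\<close> \<open>\<epsilon> > 0\<close> by simp
  then obtain z g where zg: "state_pair z g" "1 - min \<delta> \<epsilon> < h z" "1 - min \<delta> \<epsilon> < \<bar>g y\<bar>"
    using rank_one_almost_norming_state[OF radius h y] by blast
  then have g: "bounded_linear g" "onorm g = 1" "norm z = 1" "g z = 1"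
    by (simp_all add: state_pair_def)
  have "norm (z - x) < \<epsilon>"
    using slice[of z] zg(2) g(3) by simp
  then have "1 - \<epsilon> < g x"
    using abs_le_norm_if_onorm_le_1[OF g(1), of "z - x"] g(1,2,4)
    by (simp add: linear_diff bounded_linear.linear)
  moreover have "\<bar>g x\<bar> + \<bar>g y\<bar> \<le> max (norm (x + y)) (norm (x - y))"
    using g(1,2) by (intro abs_add_abs_le_max_norm) simp_all
  ultimately show ?thesis
    using zg(3) by linarith
qed

lemma numerical_radius_ge_1_imp_parallel:
  fixes x y :: 'a
  assumes "\<forall>T::'a \<Rightarrow> 'a. bounded_linear T \<longrightarrow> onorm T = 1 \<longrightarrow> 1 \<le> numerical_radius T"
    and "x extreme_point_of cball 0 1" "norm x = 1" "norm y = 1"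
  shows "parallel_pair x y"
proof -
  define M where "M = max (norm (x + y)) (norm (x - y))"
  have "2 \<le> M"
  proof (rule ccontr)
    assume "\<not> 2 \<le> M"
    then have "(2 - M) / 2 > 0"
      by simp
    then have "2 - 2 * ((2 - M) / 2) < M"
      unfolding M_def by (rule numerical_radius_ge_1_imp_almost_parallel[OF assms])
    then show False
      by (simp add: field_simps)
  qed
  moreover have "norm (x + y) \<le> 2" "norm (x - y) \<le> 2"
    using assms(3,4) norm_triangle_ineq[of x y] norm_triangle_ineq4[of x y] by simp_all
  ultimately have "M = 2"
    by (simp add: M_def)
  then show ?thesis
    using assms(3,4) by (simp add: parallel_pair_iff_max M_def)
qed

end

theorem mainTheorem3:
  assumes fin_dim: "\<exists>B :: 'a::banach set. finite B \<and> span B = UNIV"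
    and nontriv: "\<exists>x :: 'a. x \<noteq> 0"
  shows "numerical_index TYPE('a) = 1 \<longleftrightarrow>
         (\<forall>x y :: 'a. x extreme_point_of cball 0 1 \<longrightarrow> norm y = 1 \<longrightarrow> parallel_pair x y)"
proof -
  obtain S :: "'a set" where "finite S" "span S = UNIV"
    using fin_dim by blast
  then obtain B where "B \<subseteq> S" "independent B" "span B = UNIV"
    using maximal_independent_subset[of S] by (metis span_mono span_span top.extremum_uniqueI)
  then interpret finite_basis B
    using \<open>finite S\<close> finite_subset by unfold_locales blast+
  obtain e :: 'a where "e \<noteq> 0"
    using nontriv by blast
  then obtain x0 f0 where "state_pair (x0 :: 'a) f0"
    by (rule state_pair_exists)
  then have "numerical_index TYPE('a) = 1 \<longleftrightarrow>
      (\<forall>T::'a \<Rightarrow> 'a. bounded_linear T \<longrightarrow> onorm T = 1 \<longrightarrow> 1 \<le> numerical_radius T)"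
    by (rule numerical_index_eq_1_iff)
  also have "\<dots> \<longleftrightarrow> (\<forall>x y :: 'a. x extreme_point_of cball 0 1 \<longrightarrow> norm y = 1 \<longrightarrow> parallel_pair x y)"
    using numerical_radius_ge_1_imp_parallel parallel_imp_numerical_radius_ge_1
      extreme_point_of_unit_cball_norm[OF _ \<open>e \<noteq> 0\<close>] by blast
  finally show ?thesis .
qed

end
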